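(* Let $R$ be a semiring and $f, g: N \to M$ two homomorphisms of left $R$-semimodules. Define $m \sim_{(f,g)} m'$ if and only if there exist $k \ge 1$, elements $m_1, \ldots, m_k \in M$ and $n_1, \ldots, n_k, n'_1, \ldots, n'_k \in N$ such that $m = m_1 + f(n_1) + g(n'_1)$, $m_i + f(n'_i) + g(n_i) = m_{i+1} + f(n_{i+1}) + g(n'_{i+1})$ for $1 \le i \le k-1$, and $m_k + f(n'_k) + g(n_k) = m'$. Then $\sim_{(f,g)}$ is a congruence relation on $M$.
   Context: A semiring $R$ is a commutative monoid $(R,+,0)$ with an associative multiplication with unit $1$, distributive on both sides, and with $0r = 0 = r0$. A left $R$-semimodule is a commutative monoid $(M,+,0)$ with a map $R\times M \to M$ satisfying $(rr')m = r(r'm)$, $(r+r')m = rm + r'm$, $r(m+m') = rm + rm'$, $1m = m$, $0m = 0 = r0$. A homomorphism of left $R$-semimodules is an additive map $f$ with $f(rm) = rf(m)$. A congruence relation on $M$ is an equivalence relation $\sim$ such that $m \sim m'$ implies $m + n \sim m' + n$ and $rm \sim rm'$ for all $n \in M$, $r \in R$. *)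

theory Defs
  imports Main
begin

definition semiring :: "('r \<Rightarrow> 'r \<Rightarrow> 'r) \<Rightarrow> 'r \<Rightarrow> ('r \<Rightarrow> 'r \<Rightarrow> 'r) \<Rightarrow> 'r \<Rightarrow> bool" where
  "semiring add zero mul one \<longleftrightarrow>
     (\<forall>a b c. add (add a b) c = add a (add b c)) \<and>
     (\<forall>a b. add a b = add b a) \<and>
     (\<forall>a. add zero a = a) \<and>
     (\<forall>a b c. mul (mul a b) c = mul a (mul b c)) \<and>
     (\<forall>a. mul one a = a \<and> mul a one = a) \<and>
     (\<forall>a b c. mul a (add b c) = add (mul a b) (mul a c)) \<and>
     (\<forall>a b c. mul (add a b) c = add (mul a c) (mul b c)) \<and>
     (\<forall>a. mul zero a = zero \<and> mul a zero = zero)"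

definition semimodule ::
  "('r \<Rightarrow> 'r \<Rightarrow> 'r) \<Rightarrow> 'r \<Rightarrow> ('r \<Rightarrow> 'r \<Rightarrow> 'r) \<Rightarrow> 'r \<Rightarrow>
   ('m \<Rightarrow> 'm \<Rightarrow> 'm) \<Rightarrow> 'm \<Rightarrow> ('r \<Rightarrow> 'm \<Rightarrow> 'm) \<Rightarrow> bool" where
  "semimodule radd rzero rmul rone madd mzero smul \<longleftrightarrow>
     semiring radd rzero rmul rone \<and>
     (\<forall>a b c. madd (madd a b) c = madd a (madd b c)) \<and>
     (\<forall>a b. madd a b = madd b a) \<and>
     (\<forall>a. madd mzero a = a) \<and>
     (\<forall>r r' m. smul (rmul r r') m = smul r (smul r' m)) \<and>
     (\<forall>r r' m. smul (radd r r') m = madd (smul r m) (smul r' m)) \<and>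
     (\<forall>r m m'. smul r (madd m m') = madd (smul r m) (smul r m')) \<and>
     (\<forall>m. smul rone m = m) \<and>
     (\<forall>m. smul rzero m = mzero) \<and>
     (\<forall>r. smul r mzero = mzero)"

definition semimodule_hom ::
  "('n \<Rightarrow> 'n \<Rightarrow> 'n) \<Rightarrow> ('r \<Rightarrow> 'n \<Rightarrow> 'n) \<Rightarrow>
   ('m \<Rightarrow> 'm \<Rightarrow> 'm) \<Rightarrow> ('r \<Rightarrow> 'm \<Rightarrow> 'm) \<Rightarrow> ('n \<Rightarrow> 'm) \<Rightarrow> bool" where
  "semimodule_hom nadd nsmul madd msmul h \<longleftrightarrow>
     (\<forall>x y. h (nadd x y) = madd (h x) (h y)) \<and>
     (\<forall>r x. h (nsmul r x) = msmul r (h x))"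

definition semimodule_congruence ::
  "('m \<Rightarrow> 'm \<Rightarrow> 'm) \<Rightarrow> ('r \<Rightarrow> 'm \<Rightarrow> 'm) \<Rightarrow> ('m \<Rightarrow> 'm \<Rightarrow> bool) \<Rightarrow> bool" where
  "semimodule_congruence madd smul rel \<longleftrightarrow>
     equivp rel \<and>
     (\<forall>m m' n. rel m m' \<longrightarrow> rel (madd m n) (madd m' n)) \<and>
     (\<forall>m m' r. rel m m' \<longrightarrow> rel (smul r m) (smul r m'))"

text \<open>The relation \<sim>_(f,g): chains indexed by 1..k.\<close>
definition fg_rel ::
  "('m \<Rightarrow> 'm \<Rightarrow> 'm) \<Rightarrow> ('n \<Rightarrow> 'm) \<Rightarrow> ('n \<Rightarrow> 'm) \<Rightarrow> 'm \<Rightarrow> 'm \<Rightarrow> bool" where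
  "fg_rel madd f g m m' \<longleftrightarrow>
     (\<exists>(k::nat) (ms::nat \<Rightarrow> 'm) (ns::nat \<Rightarrow> 'n) (ns'::nat \<Rightarrow> 'n).
        k \<ge> 1 \<and>
        m = madd (madd (ms 1) (f (ns 1))) (g (ns' 1)) \<and>
        (\<forall>i. 1 \<le> i \<and> i \<le> k - 1 \<longrightarrow>
           madd (madd (ms i) (f (ns' i))) (g (ns i)) =
           madd (madd (ms (i+1)) (f (ns (i+1)))) (g (ns' (i+1)))) \<and>
        madd (madd (ms k) (f (ns' k))) (g (ns k)) = m')"

end

theory Submission
  imports Defs
begin

text \<open>A chain witnessing \<open>m \<sim>\<^sub>(\<^sub>f\<^sub>,\<^sub>g\<^sub>) m'\<close> is a sequence of elementary moves
  \<open>a + f(n) + g(n') \<leadsto> a + f(n') + g(n)\<close>, so \<open>\<sim>\<^sub>(\<^sub>f\<^sub>,\<^sub>g\<^sub>)\<close> is the transitive closure of the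
  move relation. Moves are is symmetric, reflexive (take \<open>n = n' = 0\<close>), and preserved by
  translations and scalar multiplication; all these properties pass to the transitive closure.\<close>

definition fg_step :: "('m \<Rightarrow> 'm \<Rightarrow> 'm) \<Rightarrow> ('n \<Rightarrow> 'm) \<Rightarrow> ('n \<Rightarrow> 'm) \<Rightarrow> 'm \<Rightarrow> 'm \<Rightarrow> bool" where
  "fg_step madd f g x y \<longleftrightarrow>
     (\<exists>a n n'. x = madd (madd a (f n)) (g n') \<and> y = madd (madd a (f n')) (g n))"

lemma tranclp_eq_rtranclp_if_reflp: "reflp r \<Longrightarrow> r\<^sup>+\<^sup>+ = r\<^sup>*\<^sup>*"
  by (metis reflclp_ident_if_reflp reflclp_tranclp reflp_def tranclp.r_into_trancl)

lemma rtranclp_map: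
  assumes "r\<^sup>*\<^sup>* x y" and "\<And>x y. r x y \<Longrightarrow> r (h x) (h y)"
  shows "r\<^sup>*\<^sup>* (h x) (h y)"
  using assms(1) by induction (auto intro: assms(2) rtranclp.rtrancl_into_rtrancl)

lemma fg_rel_eq_tranclp_fg_step: "fg_rel madd f g = (fg_step madd f g)\<^sup>+\<^sup>+"
proof (intro ext iffI)
  fix x y
  assume "fg_rel madd f g x y"
  then obtain k :: nat and ms ns ns' where k: "k \<ge> 1"
    and start: "x = madd (madd (ms 1) (f (ns 1))) (g (ns' 1))"
    and link: "\<forall>i. 1 \<le> i \<and> i \<le> k - 1 \<longrightarrow>
           madd (madd (ms i) (f (ns' i))) (g (ns i)) =
           madd (madd (ms (i+1)) (f (ns (i+1)))) (g (ns' (i+1)))"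
    and finish: "madd (madd (ms k) (f (ns' k))) (g (ns k)) = y"
    unfolding fg_rel_def by blast
  have "(fg_step madd f g)\<^sup>+\<^sup>+ x (madd (madd (ms j) (f (ns' j))) (g (ns j)))"
    if "1 \<le> j" "j \<le> k" for j
    using that
  proof (induction j rule: nat_induct_at_least)
    case base
    then show ?case using start unfolding fg_step_def by blast
  next
    case (Suc j)
    have "fg_step madd f g (madd (madd (ms j) (f (ns' j))) (g (ns j)))
            (madd (madd (ms (Suc j)) (f (ns' (Suc j)))) (g (ns (Suc j))))"
      using link Suc.hyps Suc.prems unfolding fg_step_def by fastforce
    then show ?case using Suc by (auto intro: tranclp.trancl_into_trancl)
  qed
  then show "(fg_step madd f g)\<^sup>+\<^sup>+ x y" using k finish by blast
next
  fix x y
  assume "(fg_step madd f g)\<^sup>+\<^sup>+ x y"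
  then show "fg_rel madd f g x y"
  proof (induction rule: tranclp_induct)
    case (base y)
    then obtain a n n' where "x = madd (madd a (f n)) (g n')" "y = madd (madd a (f n')) (g n)"
      unfolding fg_step_def by blast
    then show ?case
      unfolding fg_rel_def by (intro exI[of _ 1] exI[of _ "\<lambda>_. a"] exI[of _ "\<lambda>_. n"] exI[of _ "\<lambda>_. n'"]) auto
  next
    case (step y z)
    obtain k :: nat and ms ns ns' where k: "k \<ge> 1"
      and start: "x = madd (madd (ms 1) (f (ns 1))) (g (ns' 1))"
      and link: "\<forall>i. 1 \<le> i \<and> i \<le> k - 1 \<longrightarrow>
             madd (madd (ms i) (f (ns' i))) (g (ns i)) =
             madd (madd (ms (i+1)) (f (ns (i+1)))) (g (ns' (i+1)))"
      and finish: "madd (madd (ms k) (f (ns' k))) (g (ns k)) = y"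
      using step.IH unfolding fg_rel_def by blast
    obtain a n n' where "y = madd (madd a (f n)) (g n')" "z = madd (madd a (f n')) (g n)"
      using step.hyps(2) unfolding fg_step_def by blast
    then show ?case
      unfolding fg_rel_def using k start link finish
      by (intro exI[of _ "Suc k"] exI[of _ "ms(Suc k := a)"] exI[of _ "ns(Suc k := n)"]
          exI[of _ "ns'(Suc k := n')"]) (auto simp: le_Suc_eq)
  qed
qed

lemma symp_fg_step: "symp (fg_step madd f g)"
  unfolding symp_def fg_step_def by blast

lemma reflp_fg_step:
  assumes "\<And>x. madd x zero = x" and "f z = zero" and "g z = zero"
  shows "reflp (fg_step madd f g)"
  unfolding reflp_def fg_step_def using assms by metis

lemma fg_step_add_right:
  assumes "abel_semigroup madd" and "fg_step madd f g x y"
  shows "fg_step madd f g (madd x c) (madd y c)"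
proof -
  interpret abel_semigroup madd by fact
  obtain a n n' where "x = madd (madd a (f n)) (g n')" "y = madd (madd a (f n')) (g n)"
    using assms(2) unfolding fg_step_def by blast
  then show ?thesis
    unfolding fg_step_def by (intro exI[of _ "madd a c"]) (metis assoc commute)
qed

lemma fg_step_smul:
  assumes "\<And>r x y. msmul r (madd x y) = madd (msmul r x) (msmul r y)"
    and "semimodule_hom nadd nsmul madd msmul f" and "semimodule_hom nadd nsmul madd msmul g"
    and "fg_step madd f g x y"
  shows "fg_step madd f g (msmul r x) (msmul r y)"
proof -
  obtain a n n' where "x = madd (madd a (f n)) (g n')" "y = madd (madd a (f n')) (g n)"
    using assms(4) unfolding fg_step_def by blast
  then show ?thesis
    using assms(1-3) unfolding fg_step_def semimodule_hom_def
    by (intro exI[of _ "msmul r a"] exI[of _ "nsmul r n"] exI[of _ "nsmul r n'"]) auto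
qed

lemma semimodule_hom_zero:
  assumes "semimodule radd rzero rmul rone nadd nzero nsmul"
    and "semimodule radd rzero rmul rone madd mzero msmul"
    and "semimodule_hom nadd nsmul madd msmul h"
  shows "h nzero = mzero"
proof -
  have "h nzero = h (nsmul rzero nzero)" using assms(1) unfolding semimodule_def by simp
  also have "\<dots> = msmul rzero (h nzero)" using assms(3) unfolding semimodule_hom_def by blast
  also have "\<dots> = mzero" using assms(2) unfolding semimodule_def by blast
  finally show ?thesis .
qed

theorem lemma2p12:
  fixes radd rmul :: "'r \<Rightarrow> 'r \<Rightarrow> 'r" and rzero rone :: 'r
    and nadd :: "'n \<Rightarrow> 'n \<Rightarrow> 'n" and nzero :: 'n and nsmul :: "'r \<Rightarrow> 'n \<Rightarrow> 'n"
    and madd :: "'m \<Rightarrow> 'm \<Rightarrow> 'm" and mzero :: 'm and msmul :: "'r \<Rightarrow> 'm \<Rightarrow> 'm"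
    and f g :: "'n \<Rightarrow> 'm"
  assumes "semiring radd rzero rmul rone"
    and "semimodule radd rzero rmul rone nadd nzero nsmul"
    and "semimodule radd rzero rmul rone madd mzero msmul"
    and "semimodule_hom nadd nsmul madd msmul f"
    and "semimodule_hom nadd nsmul madd msmul g"
  shows "semimodule_congruence madd msmul (fg_rel madd f g)"
proof -
  interpret comm_monoid madd mzero
    using assms(3) unfolding semimodule_def by unfold_locales auto
  have smul_add: "\<And>r x y. msmul r (madd x y) = madd (msmul r x) (msmul r y)"
    using assms(3) unfolding semimodule_def by blast
  have "reflp (fg_step madd f g)"
    by (rule reflp_fg_step[where z = nzero])
      (simp_all add: semimodule_hom_zero[OF assms(2,3)] assms(4,5))
  then have rel: "fg_rel madd f g = (fg_step madd f g)\<^sup>*\<^sup>*"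
    by (simp add: fg_rel_eq_tranclp_fg_step tranclp_eq_rtranclp_if_reflp)
  have "(fg_step madd f g)\<^sup>*\<^sup>* (madd x c) (madd y c)"
    if "(fg_step madd f g)\<^sup>*\<^sup>* x y" for x y c
    using that by (rule rtranclp_map[where h = "\<lambda>x. madd x c"])
      (rule fg_step_add_right[OF abel_semigroup_axioms])
  moreover have "(fg_step madd f g)\<^sup>*\<^sup>* (msmul r x) (msmul r y)"
    if "(fg_step madd f g)\<^sup>*\<^sup>* x y" for x y r
    using that by (rule rtranclp_map[where h = "msmul r"])
      (rule fg_step_smul[OF smul_add assms(4,5)])
  ultimately show ?thesis
    unfolding semimodule_congruence_def rel using equivp_rtranclp[OF symp_fg_step] by blast
qed

end
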